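(* In the setting below, for $z\in\mathbb{Z}/(n)$ let $A_z=\{((t_1,\dots,t_n),(s_1,\dots,s_n))\in T\rtimes_\circ S : t_{z'}=0 \text{ and } s_{z'}=0 \text{ for all } z'\neq z\}$. Then each $A_z$ is a left ideal of $T\rtimes_\circ S$ whose multiplicative group is abelian, and the additive group of $T\rtimes_\circ S$ is the direct sum of the additive groups of the $A_z$. If $\alpha$ is not trivial, then the multiplicative group of $T\rtimes_\circ S$ is metabelian but not abelian. Moreover, if the $A_z$ are finite and of pairwise relatively prime orders, then all Sylow subgroups of the multiplicative group of $T\rtimes_\circ S$ are abelian.
   Context: A left brace is a set $B$ with two operations $+,\cdot$ such that $(B,+)$ is an abelian group, $(B,\cdot)$ is a group and $a(b+c)+a=ab+ac$ for all $a,b,c$; $\lambda_a(b)=ab-a$. A left ideal is a subgroup $L$ of $(B,+)$ with $\lambda_b(L)\subseteq L$ for all $b\in B$. A left brace is trivial if $ab=a+b$ for all $a,b$. For a symmetric bi-additive map $b\colon T\times T\to S$, $\mathrm{O}(T,b)=\{f\in\mathrm{Aut}(T,+): b(f(x),f(y))=b(x,y)\ \forall x,y\}$. Setting: $n>1$; for each $z\in\mathbb{Z}/(n)$, $T_z,S_z$ are trivial left braces, $b_z\colon T_z\times T_z\to S_z$ is symmetric bilinear, and $f^{(z,z')}\colon S_z\to\mathrm{O}(T_{z'},b_{z'})$ ($z,z'\in\mathbb{Z}/(n)$) are group homomorphisms $s\mapsto f^{(z,z')}_s$ with $f^{(z_1,z)}_{s_1}f^{(z_2,z)}_{s_2}=f^{(z_2,z)}_{s_2}f^{(z_1,z)}_{s_1}$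 and $f^{(z,z)}_s=\mathrm{id}$. $T=\prod_z T_z$, $S=\prod_z S_z$, $b(t,t')=(b_z(t_z,t'_z))_z$, and $\alpha_{(s_1,\dots,s_n)}(t_1,\dots,t_n)=(f^{(1,1)}_{s_1}\cdots f^{(n,1)}_{s_n}(t_1),\dots,f^{(1,n)}_{s_1}\cdots f^{(n,n)}_{s_n}(t_n))$; $\alpha$ is trivial means $\alpha_s=\mathrm{id}$ for all $s$. $T\rtimes_\circ S$ is the set $T\times S$ with $(t_1,s_1)+(t_2,s_2)=(t_1+t_2,s_1+s_2+b(t_1,t_2))$ and $(t_1,s_1)(t_2,s_2)=(t_1+\alpha_{s_1}(t_2),s_1+s_2)$; it is a left brace. *)

theory Defs
  imports "HOL-Algebra.Algebra" "HOL-Computational_Algebra.Primes"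
begin

text \<open>The index set Z/(n) is represented by the residues 0, ..., n-1 (type nat).
  All T_z live inside one ambient abelian group type 't, all S_z inside 's.\<close>

definition ab_subgroup :: "'a::ab_group_add set \<Rightarrow> bool" where
  "ab_subgroup A \<longleftrightarrow> 0 \<in> A \<and> (\<forall>x\<in>A. \<forall>y\<in>A. x + y \<in> A) \<and> (\<forall>x\<in>A. - x \<in> A)"

definition sym_biadditive :: "'t::ab_group_add set \<Rightarrow> 's::ab_group_add set \<Rightarrow> ('t \<Rightarrow> 't \<Rightarrow> 's) \<Rightarrow> bool" where
  "sym_biadditive T S b \<longleftrightarrow>
     (\<forall>x\<in>T. \<forall>y\<in>T. b x y \<in> S \<and> b x y = b y x) \<and>
     (\<forall>x\<in>T. \<forall>x'\<in>T. \<forall>y\<in>T. b (x + x') y = b x y + b x' y)"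

definition orth_group :: "'t::ab_group_add set \<Rightarrow> ('t \<Rightarrow> 't \<Rightarrow> 's) \<Rightarrow> ('t \<Rightarrow> 't) set" where
  "orth_group T b = {g. bij_betw g T T \<and> (\<forall>x\<in>T. \<forall>y\<in>T. g (x + y) = g x + g y)
                        \<and> (\<forall>x\<in>T. \<forall>y\<in>T. b (g x) (g y) = b x y)}"

definition setting ::
  "nat \<Rightarrow> (nat \<Rightarrow> 't::ab_group_add set) \<Rightarrow> (nat \<Rightarrow> 's::ab_group_add set)
   \<Rightarrow> (nat \<Rightarrow> 't \<Rightarrow> 't \<Rightarrow> 's) \<Rightarrow> (nat \<Rightarrow> nat \<Rightarrow> 's \<Rightarrow> 't \<Rightarrow> 't) \<Rightarrow> bool" where
  "setting n TT SS b f \<longleftrightarrow> n > 1 \<and>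
     (\<forall>z<n. ab_subgroup (TT z) \<and> ab_subgroup (SS z) \<and> sym_biadditive (TT z) (SS z) (b z)) \<and>
     (\<forall>z<n. \<forall>z'<n. \<forall>s\<in>SS z. f z z' s \<in> orth_group (TT z') (b z')) \<and>
     (\<forall>z<n. \<forall>z'<n. \<forall>s1\<in>SS z. \<forall>s2\<in>SS z. \<forall>t\<in>TT z'.
         f z z' (s1 + s2) t = f z z' s1 (f z z' s2 t)) \<and>
     (\<forall>z1<n. \<forall>z2<n. \<forall>z<n. \<forall>s1\<in>SS z1. \<forall>s2\<in>SS z2. \<forall>t\<in>TT z.
         f z1 z s1 (f z2 z s2 t) = f z2 z s2 (f z1 z s1 t)) \<and>
     (\<forall>z<n. \<forall>s\<in>SS z. \<forall>t\<in>TT z. f z z s t = t)"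

text \<open>T = prod_z T_z and S = prod_z S_z, as functions extensional outside {0..<n}.\<close>
definition prodT :: "nat \<Rightarrow> (nat \<Rightarrow> 'a::zero set) \<Rightarrow> (nat \<Rightarrow> 'a) set" where
  "prodT n A = {x. (\<forall>z<n. x z \<in> A z) \<and> (\<forall>z\<ge>n. x z = 0)}"

definition alpha :: "nat \<Rightarrow> (nat \<Rightarrow> nat \<Rightarrow> 's \<Rightarrow> 't \<Rightarrow> 't) \<Rightarrow> (nat \<Rightarrow> 's) \<Rightarrow> (nat \<Rightarrow> 't::zero) \<Rightarrow> (nat \<Rightarrow> 't)" where
  "alpha n f s t = (\<lambda>z. if z < n then foldr (\<lambda>z' g. f z' z (s z') \<circ> g) [0..<n] id (t z) else 0)"

definition sdp_carrier :: "nat \<Rightarrow> (nat \<Rightarrow> 't::zero set) \<Rightarrow> (nat \<Rightarrow> 's::zero set) \<Rightarrow> ((nat \<Rightarrow> 't) \<times> (nat \<Rightarrow> 's)) set" where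
  "sdp_carrier n TT SS = prodT n TT \<times> prodT n SS"

definition sdp_add :: "nat \<Rightarrow> (nat \<Rightarrow> 't::ab_group_add \<Rightarrow> 't \<Rightarrow> 's::ab_group_add)
   \<Rightarrow> (nat \<Rightarrow> 't) \<times> (nat \<Rightarrow> 's) \<Rightarrow> (nat \<Rightarrow> 't) \<times> (nat \<Rightarrow> 's) \<Rightarrow> (nat \<Rightarrow> 't) \<times> (nat \<Rightarrow> 's)" where
  "sdp_add n b x y = (\<lambda>z. fst x z + fst y z,
       \<lambda>z. if z < n then snd x z + snd y z + b z (fst x z) (fst y z) else 0)"

definition sdp_mult :: "nat \<Rightarrow> (nat \<Rightarrow> nat \<Rightarrow> 's::ab_group_add \<Rightarrow> 't::ab_group_add \<Rightarrow> 't)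
   \<Rightarrow> (nat \<Rightarrow> 't) \<times> (nat \<Rightarrow> 's) \<Rightarrow> (nat \<Rightarrow> 't) \<times> (nat \<Rightarrow> 's) \<Rightarrow> (nat \<Rightarrow> 't) \<times> (nat \<Rightarrow> 's)" where
  "sdp_mult n f x y = (\<lambda>z. fst x z + alpha n f (snd x) (fst y) z, \<lambda>z. snd x z + snd y z)"

definition sdp_addG :: "nat \<Rightarrow> (nat \<Rightarrow> 't::ab_group_add set) \<Rightarrow> (nat \<Rightarrow> 's::ab_group_add set)
   \<Rightarrow> (nat \<Rightarrow> 't \<Rightarrow> 't \<Rightarrow> 's) \<Rightarrow> ((nat \<Rightarrow> 't) \<times> (nat \<Rightarrow> 's)) monoid" where
  "sdp_addG n TT SS b = \<lparr>carrier = sdp_carrier n TT SS, monoid.mult = sdp_add n b, one = (\<lambda>_. 0, \<lambda>_. 0)\<rparr>"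

definition sdp_multG :: "nat \<Rightarrow> (nat \<Rightarrow> 't::ab_group_add set) \<Rightarrow> (nat \<Rightarrow> 's::ab_group_add set)
   \<Rightarrow> (nat \<Rightarrow> nat \<Rightarrow> 's \<Rightarrow> 't \<Rightarrow> 't) \<Rightarrow> ((nat \<Rightarrow> 't) \<times> (nat \<Rightarrow> 's)) monoid" where
  "sdp_multG n TT SS f = \<lparr>carrier = sdp_carrier n TT SS, monoid.mult = sdp_mult n f, one = (\<lambda>_. 0, \<lambda>_. 0)\<rparr>"

definition alpha_trivial :: "nat \<Rightarrow> (nat \<Rightarrow> 't::ab_group_add set) \<Rightarrow> (nat \<Rightarrow> 's::ab_group_add set)
   \<Rightarrow> (nat \<Rightarrow> nat \<Rightarrow> 's \<Rightarrow> 't \<Rightarrow> 't) \<Rightarrow> bool" where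
  "alpha_trivial n TT SS f \<longleftrightarrow> (\<forall>s\<in>prodT n SS. \<forall>t\<in>prodT n TT. alpha n f s t = t)"

definition component :: "nat \<Rightarrow> (nat \<Rightarrow> 't::ab_group_add set) \<Rightarrow> (nat \<Rightarrow> 's::ab_group_add set)
   \<Rightarrow> nat \<Rightarrow> ((nat \<Rightarrow> 't) \<times> (nat \<Rightarrow> 's)) set" where
  "component n TT SS z = {x \<in> sdp_carrier n TT SS. \<forall>z'<n. z' \<noteq> z \<longrightarrow> fst x z' = 0 \<and> snd x z' = 0}"

text \<open>Left ideal of a left brace with additive group AG and multiplicative group MG (same carrier):
  additive subgroup L with lambda_b(L) in L, where lambda_b(a) = b a - b.\<close>
definition left_ideal :: "('a, 'c) monoid_scheme \<Rightarrow> ('a, 'd) monoid_scheme \<Rightarrow> 'a set \<Rightarrow> bool" where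
  "left_ideal AG MG L \<longleftrightarrow> subgroup L AG \<and>
     (\<forall>b\<in>carrier MG. \<forall>a\<in>L. (b \<otimes>\<^bsub>MG\<^esub> a) \<otimes>\<^bsub>AG\<^esub> inv\<^bsub>AG\<^esub> b \<in> L)"

definition metabelian :: "('a, 'c) monoid_scheme \<Rightarrow> bool" where
  "metabelian G \<longleftrightarrow> group G \<and> comm_group (G\<lparr>carrier := derived G (carrier G)\<rparr>)"

definition sylow_subgroup :: "('a, 'c) monoid_scheme \<Rightarrow> nat \<Rightarrow> 'a set \<Rightarrow> bool" where
  "sylow_subgroup G p P \<longleftrightarrow> Factorial_Ring.prime p \<and> subgroup P G \<and>
     (\<exists>k. card P = p ^ k \<and> p ^ k dvd order G \<and> \<not> p ^ Suc k dvd order G)"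

end

theory Submission
  imports Defs
begin

text \<open>On a component A z the twisting alpha only involves the actions f z z _ = id, so
  A z is an abelian subgroup, and the additive group splits coordinatewise. The map (t, s) \<mapsto> s is
  a homomorphism onto the abelian group S, so all commutators lie in its kernel T \<times> 0, which is
  abelian; if alpha is nontrivial, some (0, s) and (t, 0) do not commute.
  For a Sylow p-subgroup P, coprimality leaves at most one index z0 with p dividing |A z0|. The
  projections onto the other components A w are homomorphisms on the whole group (S-part) and on
  T \<times> 0 (T-part), hence kill the S-parts of the elements of P and the T-parts of the quotients
  (y x)^-1 (x y) for x, y \<in> P. What is left lives in coordinate z0, where the action is
  trivial, so x y = y x.\<close>

lemma hom_pow_coprime_eq_one:
  assumes "group G" "group H" "h \<in> hom G H" "x \<in> carrier G"
    and "x [^]\<^bsub>G\<^esub> m = \<one>\<^bsub>G\<^esub>" "coprime m (order H)"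
  shows "h x = \<one>\<^bsub>H\<^esub>"
proof -
  interpret group_hom G H h
    using assms(1-3) by (simp add: group_hom_def group_hom_axioms_def)
  have hx: "h x \<in> carrier H" using assms(4) by simp
  have "h x [^]\<^bsub>H\<^esub> m = \<one>\<^bsub>H\<^esub>" using assms(4,5) by (metis hom_nat_pow hom_one)
  then have "H.ord (h x) dvd m" using H.pow_eq_id[OF hx] by simp
  moreover have "H.ord (h x) dvd order H" using H.ord_dvd_group_order[OF hx] .
  ultimately have "H.ord (h x) = 1" using assms(6) by (metis coprime_common_divisor_nat)
  then show ?thesis using H.ord_eq_1[OF hx] by simp
qed

lemma prime_dvd_at_most_one:
  fixes g :: "'a \<Rightarrow> nat"
  assumes "Factorial_Ring.prime p" and "\<forall>i\<in>I. \<forall>j\<in>I. i \<noteq> j \<longrightarrow> coprime (g i) (g j)"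
  obtains i0 where "\<forall>i\<in>I. i \<noteq> i0 \<longrightarrow> \<not> p dvd g i"
proof (cases "\<exists>i\<in>I. p dvd g i")
  case True
  then obtain i0 where "i0 \<in> I" "p dvd g i0" by blast
  then have "\<not> p dvd g i" if "i \<in> I" "i \<noteq> i0" for i
    using assms that by (meson coprime_common_divisor not_prime_unit)
  then show ?thesis using that by blast
next
  case False
  then show ?thesis using that by blast
qed

lemma (in group) comm_group_subgroupI:
  assumes "subgroup K G" and "\<And>x y. x \<in> K \<Longrightarrow> y \<in> K \<Longrightarrow> x \<otimes> y = y \<otimes> x"
  shows "comm_group (G\<lparr>carrier := K\<rparr>)"
proof -
  interpret K: group "G\<lparr>carrier := K\<rparr>" using subgroup_imp_group[OF assms(1)] .
  show ?thesis by (rule K.group_comm_groupI) (simp add: assms(2))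
qed

lemma (in group) metabelianI:
  assumes "subgroup K G" and "\<And>x y. x \<in> K \<Longrightarrow> y \<in> K \<Longrightarrow> x \<otimes> y = y \<otimes> x"
    and "derived_set G (carrier G) \<subseteq> K"
  shows "metabelian G"
proof -
  have "derived G (carrier G) \<subseteq> K"
    unfolding derived_def using generate_subgroup_incl[OF assms(3,1)] .
  then have "comm_group (G\<lparr>carrier := derived G (carrier G)\<rparr>)"
    using derived_is_subgroup[of "carrier G"] assms(2) by (intro comm_group_subgroupI) auto
  then show ?thesis unfolding metabelian_def using is_group by simp
qed

locale sdp_setting =
  fixes n :: nat and TT :: "nat \<Rightarrow> 't::ab_group_add set" and SS :: "nat \<Rightarrow> 's::ab_group_add set"
    and b :: "nat \<Rightarrow> 't \<Rightarrow> 't \<Rightarrow> 's" and f :: "nat \<Rightarrow> nat \<Rightarrow> 's \<Rightarrow> 't \<Rightarrow> 't"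
  assumes setting: "setting n TT SS b f"
begin

lemma T_zero [simp]: "z < n \<Longrightarrow> 0 \<in> TT z"
  and T_add [simp]: "z < n \<Longrightarrow> x \<in> TT z \<Longrightarrow> y \<in> TT z \<Longrightarrow> x + y \<in> TT z"
  and T_uminus [simp]: "z < n \<Longrightarrow> x \<in> TT z \<Longrightarrow> - x \<in> TT z"
  and S_zero [simp]: "z < n \<Longrightarrow> 0 \<in> SS z"
  and S_add [simp]: "z < n \<Longrightarrow> u \<in> SS z \<Longrightarrow> v \<in> SS z \<Longrightarrow> u + v \<in> SS z"
  and S_uminus [simp]: "z < n \<Longrightarrow> u \<in> SS z \<Longrightarrow> - u \<in> SS z"
  using setting unfolding setting_def ab_subgroup_def by auto

lemma S_diff [simp]: "z < n \<Longrightarrow> u \<in> SS z \<Longrightarrow> v \<in> SS z \<Longrightarrow> u - v \<in> SS z"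
  by (metis S_add S_uminus diff_conv_add_uminus)

lemma b_in_S [simp]: "z < n \<Longrightarrow> x \<in> TT z \<Longrightarrow> y \<in> TT z \<Longrightarrow> b z x y \<in> SS z"
  and b_commute: "z < n \<Longrightarrow> x \<in> TT z \<Longrightarrow> y \<in> TT z \<Longrightarrow> b z x y = b z y x"
  and b_add_left: "z < n \<Longrightarrow> x \<in> TT z \<Longrightarrow> x' \<in> TT z \<Longrightarrow> y \<in> TT z \<Longrightarrow>
      b z (x + x') y = b z x y + b z x' y"
  using setting unfolding setting_def sym_biadditive_def by auto

lemma b_add_right: "z < n \<Longrightarrow> x \<in> TT z \<Longrightarrow> y \<in> TT z \<Longrightarrow> y' \<in> TT z \<Longrightarrow>
    b z x (y + y') = b z x y + b z x y'"
  by (metis T_add b_add_left b_commute)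

lemma b_zero_left [simp]: "z < n \<Longrightarrow> y \<in> TT z \<Longrightarrow> b z 0 y = 0"
  using b_add_left[of z 0 0 y] by simp

lemma b_zero_right [simp]: "z < n \<Longrightarrow> y \<in> TT z \<Longrightarrow> b z y 0 = 0"
  using b_add_right[of z y 0 0] by simp

lemma b_uminus_right: "z < n \<Longrightarrow> x \<in> TT z \<Longrightarrow> y \<in> TT z \<Longrightarrow> b z x (- y) = - b z x y"
  using b_add_right[of z x y "- y"] by (simp add: neg_eq_iff_add_eq_0[symmetric])

lemma b_uminus_left: "z < n \<Longrightarrow> x \<in> TT z \<Longrightarrow> y \<in> TT z \<Longrightarrow> b z (- x) y = - b z x y"
  using b_uminus_right[of z y x] by (simp add: b_commute)

lemma f_orth: "z < n \<Longrightarrow> z' < n \<Longrightarrow> s \<in> SS z \<Longrightarrow> f z z' s \<in> orth_group (TT z') (b z')"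
  using setting unfolding setting_def by auto

lemma f_bij: "z < n \<Longrightarrow> z' < n \<Longrightarrow> s \<in> SS z \<Longrightarrow> bij_betw (f z z' s) (TT z') (TT z')"
  using f_orth unfolding orth_group_def by auto

lemma f_in_T [simp]: "z < n \<Longrightarrow> z' < n \<Longrightarrow> s \<in> SS z \<Longrightarrow> x \<in> TT z' \<Longrightarrow> f z z' s x \<in> TT z'"
  using f_bij bij_betwE by blast

lemma f_add: "z < n \<Longrightarrow> z' < n \<Longrightarrow> s \<in> SS z \<Longrightarrow> x \<in> TT z' \<Longrightarrow> y \<in> TT z' \<Longrightarrow>
    f z z' s (x + y) = f z z' s x + f z z' s y"
  using f_orth unfolding orth_group_def by auto

lemma f_shift_add: "z < n \<Longrightarrow> z' < n \<Longrightarrow> s1 \<in> SS z \<Longrightarrow> s2 \<in> SS z \<Longrightarrow> x \<in> TT z' \<Longrightarrow>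
    f z z' (s1 + s2) x = f z z' s1 (f z z' s2 x)"
  using setting unfolding setting_def by auto

lemma f_commute: "z1 < n \<Longrightarrow> z2 < n \<Longrightarrow> z < n \<Longrightarrow> s1 \<in> SS z1 \<Longrightarrow> s2 \<in> SS z2 \<Longrightarrow> x \<in> TT z \<Longrightarrow>
    f z1 z s1 (f z2 z s2 x) = f z2 z s2 (f z1 z s1 x)"
  using setting unfolding setting_def by auto

lemma f_diag [simp]: "z < n \<Longrightarrow> s \<in> SS z \<Longrightarrow> x \<in> TT z \<Longrightarrow> f z z s x = x"
  using setting unfolding setting_def by auto

lemma f_zero [simp]: "z < n \<Longrightarrow> z' < n \<Longrightarrow> s \<in> SS z \<Longrightarrow> f z z' s 0 = 0"
  using f_add[of z z' s 0 0] by simp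

lemma f_zero_shift [simp]:
  assumes "z < n" "z' < n" "x \<in> TT z'"
  shows "f z z' 0 x = x"
proof -
  have "inj_on (f z z' 0) (TT z')" using f_bij[OF assms(1,2) S_zero[OF assms(1)]] by (simp add: bij_betw_def)
  moreover have "f z z' 0 (f z z' 0 x) = f z z' 0 x" using f_shift_add[of z z' 0 0 x] assms by simp
  ultimately show ?thesis using assms by (auto dest: inj_onD)
qed

definition fchain :: "nat \<Rightarrow> nat list \<Rightarrow> (nat \<Rightarrow> 's) \<Rightarrow> 't \<Rightarrow> 't" where
  "fchain z L s = foldr (\<lambda>z' g. f z' z (s z') \<circ> g) L id"

definition shifts_in :: "nat list \<Rightarrow> (nat \<Rightarrow> 's) \<Rightarrow> bool" where
  "shifts_in L s \<longleftrightarrow> (\<forall>z'\<in>set L. z' < n \<and> s z' \<in> SS z')"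

lemma fchain_Nil [simp]: "fchain z [] s = id"
  by (simp add: fchain_def)

lemma fchain_Cons [simp]: "fchain z (a # L) s = f a z (s a) \<circ> fchain z L s"
  by (simp add: fchain_def)

lemma shifts_in_Cons [simp]: "shifts_in (a # L) s \<longleftrightarrow> a < n \<and> s a \<in> SS a \<and> shifts_in L s"
  by (auto simp: shifts_in_def)

lemma fchain_in_T [simp]: "z < n \<Longrightarrow> shifts_in L s \<Longrightarrow> x \<in> TT z \<Longrightarrow> fchain z L s x \<in> TT z"
  by (induction L) auto

lemma fchain_add: "z < n \<Longrightarrow> shifts_in L s \<Longrightarrow> x \<in> TT z \<Longrightarrow> y \<in> TT z \<Longrightarrow>
    fchain z L s (x + y) = fchain z L s x + fchain z L s y"
  by (induction L) (auto simp: f_add)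

lemma fchain_zero [simp]: "z < n \<Longrightarrow> shifts_in L s \<Longrightarrow> fchain z L s 0 = 0"
  by (induction L) auto

lemma fchain_concentrated: "z < n \<Longrightarrow> shifts_in L s \<Longrightarrow> \<forall>z'\<in>set L. z' \<noteq> z \<longrightarrow> s z' = 0 \<Longrightarrow>
    x \<in> TT z \<Longrightarrow> fchain z L s x = x"
  by (induction L) auto

lemma fchain_f_commute: "z < n \<Longrightarrow> shifts_in L s \<Longrightarrow> z1 < n \<Longrightarrow> r \<in> SS z1 \<Longrightarrow> x \<in> TT z \<Longrightarrow>
    f z1 z r (fchain z L s x) = fchain z L s (f z1 z r x)"
  by (induction L) (auto simp: f_commute)

lemma fchain_shift_add:
  "z < n \<Longrightarrow> shifts_in L s \<Longrightarrow> shifts_in L s' \<Longrightarrow> x \<in> TT z \<Longrightarrow>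
    fchain z L (\<lambda>z'. s z' + s' z') x = fchain z L s (fchain z L s' x)"
proof (induction L arbitrary: x)
  case Nil
  then show ?case by simp
next
  case (Cons a L)
  have "fchain z (a # L) (\<lambda>z'. s z' + s' z') x = f a z (s a + s' a) (fchain z L s (fchain z L s' x))"
    using Cons by simp
  also have "\<dots> = f a z (s a) (f a z (s' a) (fchain z L s (fchain z L s' x)))"
    using Cons by (simp add: f_shift_add)
  also have "\<dots> = f a z (s a) (fchain z L s (f a z (s' a) (fchain z L s' x)))"
    \<comment> \<open>the actions f z1 z and f z2 z commute\<close>
    using Cons by (simp add: fchain_f_commute)
  finally show ?case by simp
qed

lemma alpha_eq: "alpha n f s t = (\<lambda>z. if z < n then fchain z [0..<n] s (t z) else 0)"
  unfolding alpha_def fchain_def ..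

lemma prodT_iff: "x \<in> prodT n A \<longleftrightarrow> (\<forall>z<n. x z \<in> A z) \<and> (\<forall>z\<ge>n. x z = 0)"
  by (simp add: prodT_def)

lemma shifts_in_prodT: "s \<in> prodT n SS \<Longrightarrow> shifts_in [0..<n] s"
  by (simp add: shifts_in_def prodT_iff)

lemma alpha_in_prodT: "s \<in> prodT n SS \<Longrightarrow> t \<in> prodT n TT \<Longrightarrow> alpha n f s t \<in> prodT n TT"
  by (auto simp: alpha_eq prodT_iff shifts_in_prodT)

lemma alpha_add: "s \<in> prodT n SS \<Longrightarrow> t \<in> prodT n TT \<Longrightarrow> t' \<in> prodT n TT \<Longrightarrow>
    alpha n f s (\<lambda>z. t z + t' z) = (\<lambda>z. alpha n f s t z + alpha n f s t' z)"
  by (auto simp: alpha_eq prodT_iff shifts_in_prodT fchain_add)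

lemma alpha_shift_add: "s \<in> prodT n SS \<Longrightarrow> s' \<in> prodT n SS \<Longrightarrow> t \<in> prodT n TT \<Longrightarrow>
    alpha n f (\<lambda>z. s z + s' z) t = alpha n f s (alpha n f s' t)"
  by (auto simp: alpha_eq prodT_iff shifts_in_prodT fchain_shift_add)

lemma alpha_zero_shift: "t \<in> prodT n TT \<Longrightarrow> alpha n f (\<lambda>_. 0) t = t"
  by (auto simp: alpha_eq prodT_iff shifts_in_def fchain_concentrated)

lemma alpha_zero: "s \<in> prodT n SS \<Longrightarrow> alpha n f s (\<lambda>_. 0) = (\<lambda>_. 0)"
  by (auto simp: alpha_eq shifts_in_prodT)

lemma alpha_vanishes_at: "s \<in> prodT n SS \<Longrightarrow> t \<in> prodT n TT \<Longrightarrow> t w = 0 \<Longrightarrow> alpha n f s t w = 0"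
  by (auto simp: alpha_eq shifts_in_prodT)

lemma alpha_concentrated_at:
  "s \<in> prodT n SS \<Longrightarrow> t \<in> prodT n TT \<Longrightarrow> z < n \<Longrightarrow> \<forall>w<n. w \<noteq> z \<longrightarrow> s w = 0 \<Longrightarrow>
    alpha n f s t z = t z"
  by (auto simp: alpha_eq shifts_in_prodT prodT_iff intro!: fchain_concentrated)

lemma zero_in_prodT_T [simp]: "(\<lambda>_. 0) \<in> prodT n TT"
  and zero_in_prodT_S [simp]: "(\<lambda>_. 0) \<in> prodT n SS"
  by (simp_all add: prodT_iff)

lemma add_in_prodT_T [simp]: "t \<in> prodT n TT \<Longrightarrow> t' \<in> prodT n TT \<Longrightarrow> (\<lambda>z. t z + t' z) \<in> prodT n TT"
  and add_in_prodT_S [simp]: "s \<in> prodT n SS \<Longrightarrow> s' \<in> prodT n SS \<Longrightarrow> (\<lambda>z. s z + s' z) \<in> prodT n SS"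
  by (simp_all add: prodT_iff)

lemma uminus_in_prodT_T [simp]: "t \<in> prodT n TT \<Longrightarrow> (\<lambda>z. - t z) \<in> prodT n TT"
  and uminus_in_prodT_S [simp]: "s \<in> prodT n SS \<Longrightarrow> (\<lambda>z. - s z) \<in> prodT n SS"
  by (simp_all add: prodT_iff)

abbreviation "MG \<equiv> sdp_multG n TT SS f"
abbreviation "AG \<equiv> sdp_addG n TT SS b"
abbreviation "carr \<equiv> sdp_carrier n TT SS"
abbreviation "A \<equiv> component n TT SS"

lemma carrier_MG [simp]: "carrier MG = carr"
  by (simp add: sdp_multG_def)

lemma carrier_AG [simp]: "carrier AG = carr"
  by (simp add: sdp_addG_def)

lemma mult_MG [simp]: "x \<otimes>\<^bsub>MG\<^esub> y = sdp_mult n f x y"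
  by (simp add: sdp_multG_def)

lemma mult_AG [simp]: "x \<otimes>\<^bsub>AG\<^esub> y = sdp_add n b x y"
  by (simp add: sdp_addG_def)

lemma one_MG [simp]: "\<one>\<^bsub>MG\<^esub> = (\<lambda>_. 0, \<lambda>_. 0)"
  by (simp add: sdp_multG_def)

lemma one_AG [simp]: "\<one>\<^bsub>AG\<^esub> = (\<lambda>_. 0, \<lambda>_. 0)"
  by (simp add: sdp_addG_def)

lemma carr_iff: "x \<in> carr \<longleftrightarrow> fst x \<in> prodT n TT \<and> snd x \<in> prodT n SS"
  by (cases x) (simp add: sdp_carrier_def)

lemma sdp_mult_closed: "x \<in> carr \<Longrightarrow> y \<in> carr \<Longrightarrow> sdp_mult n f x y \<in> carr"
  by (simp add: carr_iff sdp_mult_def alpha_in_prodT)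

lemma sdp_add_closed: "x \<in> carr \<Longrightarrow> y \<in> carr \<Longrightarrow> sdp_add n b x y \<in> carr"
  by (simp add: carr_iff sdp_add_def prodT_iff)

lemma group_MG: "group MG"
proof (rule groupI)
  fix x y assume "x \<in> carrier MG" "y \<in> carrier MG"
  then show "x \<otimes>\<^bsub>MG\<^esub> y \<in> carrier MG" by (simp add: sdp_mult_closed)
next
  fix x y z assume "x \<in> carrier MG" "y \<in> carrier MG" "z \<in> carrier MG"
  then show "x \<otimes>\<^bsub>MG\<^esub> y \<otimes>\<^bsub>MG\<^esub> z = x \<otimes>\<^bsub>MG\<^esub> (y \<otimes>\<^bsub>MG\<^esub> z)"
    by (simp add: carr_iff sdp_mult_def alpha_add alpha_in_prodT alpha_shift_add add.assoc)
next
  fix x assume x: "x \<in> carrier MG"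
  define y where "y = (\<lambda>z. - alpha n f (\<lambda>z. - snd x z) (fst x) z, \<lambda>z. - snd x z)"
  have "y \<in> carrier MG" using x by (simp add: y_def carr_iff alpha_in_prodT)
  moreover have "y \<otimes>\<^bsub>MG\<^esub> x = \<one>\<^bsub>MG\<^esub>" using x by (simp add: y_def carr_iff sdp_mult_def)
  ultimately show "\<exists>y\<in>carrier MG. y \<otimes>\<^bsub>MG\<^esub> x = \<one>\<^bsub>MG\<^esub>" by blast
qed (auto simp: carr_iff sdp_mult_def alpha_zero_shift)

lemma comm_group_AG: "comm_group AG"
proof (rule comm_groupI)
  fix x y z assume xyz: "x \<in> carrier AG" "y \<in> carrier AG" "z \<in> carrier AG"
  have "snd (sdp_add n b (sdp_add n b x y) z) w = snd (sdp_add n b x (sdp_add n b y z)) w" for w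
  proof (cases "w < n")
    case True
    then have "fst x w \<in> TT w" "fst y w \<in> TT w" "fst z w \<in> TT w"
      using xyz by (auto simp: carr_iff prodT_iff)
    with True show ?thesis by (simp add: sdp_add_def b_add_left b_add_right algebra_simps)
  qed (simp add: sdp_add_def)
  then show "x \<otimes>\<^bsub>AG\<^esub> y \<otimes>\<^bsub>AG\<^esub> z = x \<otimes>\<^bsub>AG\<^esub> (y \<otimes>\<^bsub>AG\<^esub> z)"
    by (simp add: prod_eq_iff fun_eq_iff) (simp add: sdp_add_def add.assoc)
next
  fix x y assume xy: "x \<in> carrier AG" "y \<in> carrier AG"
  have "snd (sdp_add n b x y) w = snd (sdp_add n b y x) w" for w
  proof (cases "w < n")
    case True
    then have "fst x w \<in> TT w" "fst y w \<in> TT w" using xy by (auto simp: carr_iff prodT_iff)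
    with True show ?thesis by (simp add: sdp_add_def b_commute[of w "fst x w"] algebra_simps)
  qed (simp add: sdp_add_def)
  then show "x \<otimes>\<^bsub>AG\<^esub> y = y \<otimes>\<^bsub>AG\<^esub> x"
    by (simp add: prod_eq_iff fun_eq_iff) (simp add: sdp_add_def add.commute)
next
  fix x assume x: "x \<in> carrier AG"
  define y where "y = (\<lambda>z. - fst x z, \<lambda>z. if z < n then - snd x z + b z (fst x z) (fst x z) else 0)"
  have "y \<in> carrier AG" using x by (auto simp: y_def carr_iff prodT_iff)
  moreover have "y \<otimes>\<^bsub>AG\<^esub> x = \<one>\<^bsub>AG\<^esub>"
    using x by (auto simp: y_def carr_iff sdp_add_def prodT_iff prod_eq_iff fun_eq_iff b_uminus_left)
  ultimately show "\<exists>y\<in>carrier AG. y \<otimes>\<^bsub>AG\<^esub> x = \<one>\<^bsub>AG\<^esub>" by blast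
qed (auto simp: sdp_add_closed carr_iff sdp_add_def prodT_iff prod_eq_iff fun_eq_iff)

lemma inv_AG:
  assumes "x \<in> carr"
  shows "inv\<^bsub>AG\<^esub> x = (\<lambda>z. - fst x z, \<lambda>z. if z < n then - snd x z + b z (fst x z) (fst x z) else 0)"
proof -
  interpret comm_group AG by (rule comm_group_AG)
  show ?thesis
    by (rule inv_equality)
      (use assms in \<open>auto simp: carr_iff sdp_add_def prodT_iff prod_eq_iff fun_eq_iff b_uminus_left\<close>)
qed

lemma inv_MG:
  assumes "x \<in> carr"
  shows "inv\<^bsub>MG\<^esub> x = (\<lambda>z. - alpha n f (\<lambda>z. - snd x z) (fst x) z, \<lambda>z. - snd x z)"
proof -
  interpret group MG by (rule group_MG)
  show ?thesis
    by (rule inv_equality) (use assms in \<open>auto simp: carr_iff sdp_mult_def alpha_in_prodT\<close>)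
qed

lemma component_iff:
  "x \<in> A z \<longleftrightarrow> x \<in> carr \<and> (\<forall>z'<n. z' \<noteq> z \<longrightarrow> fst x z' = 0 \<and> snd x z' = 0)"
  by (simp add: component_def)

lemma alpha_concentrated:
  assumes "s \<in> prodT n SS" "t \<in> prodT n TT" "\<forall>w<n. w \<noteq> z \<longrightarrow> s w = 0 \<and> t w = 0"
  shows "alpha n f s t = t"
proof
  fix w
  show "alpha n f s t w = t w"
  proof (cases "w < n \<and> w = z")
    case True
    then show ?thesis using assms by (auto intro: alpha_concentrated_at)
  next
    case False
    then show ?thesis using assms by (auto simp: alpha_eq prodT_iff shifts_in_prodT)
  qed
qed

lemma component_subgroup_MG:
  assumes "z < n"
  shows "subgroup (A z) MG"
proof -
  interpret group MG by (rule group_MG)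
  show ?thesis
  proof (rule subgroupI)
    show "A z \<subseteq> carrier MG" by (auto simp: component_iff)
    have "\<one>\<^bsub>MG\<^esub> \<in> A z" by (simp add: component_iff carr_iff)
    then show "A z \<noteq> {}" by blast
  next
    fix a assume a: "a \<in> A z"
    then have "a \<in> carr" "inv\<^bsub>MG\<^esub> a \<in> carr" using inv_closed by (auto simp: component_iff)
    then show "inv\<^bsub>MG\<^esub> a \<in> A z"
      using a by (auto simp: component_iff inv_MG carr_iff alpha_vanishes_at)
  next
    fix a c assume "a \<in> A z" "c \<in> A z"
    then show "a \<otimes>\<^bsub>MG\<^esub> c \<in> A z"
      by (auto simp: component_iff sdp_mult_def carr_iff alpha_vanishes_at alpha_in_prodT)
  qed
qed

lemma component_mult_commute:
  assumes "x \<in> A z" "y \<in> A z"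
  shows "x \<otimes>\<^bsub>MG\<^esub> y = y \<otimes>\<^bsub>MG\<^esub> x"
proof -
  have "alpha n f (snd x) (fst y) = fst y" "alpha n f (snd y) (fst x) = fst x"
    using assms by (auto simp: component_iff carr_iff intro!: alpha_concentrated[where z = z])
  then show ?thesis by (simp add: sdp_mult_def add.commute)
qed

lemma component_comm_group: "z < n \<Longrightarrow> comm_group (MG\<lparr>carrier := A z\<rparr>)"
  by (intro group.comm_group_subgroupI group_MG component_subgroup_MG component_mult_commute)

lemma component_subgroup_AG:
  assumes "z < n"
  shows "subgroup (A z) AG"
proof -
  interpret comm_group AG by (rule comm_group_AG)
  show ?thesis
  proof (rule subgroupI)
    show "A z \<subseteq> carrier AG" by (auto simp: component_iff)
    have "\<one>\<^bsub>AG\<^esub> \<in> A z" by (simp add: component_iff carr_iff)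
    then show "A z \<noteq> {}" by blast
  next
    fix a assume a: "a \<in> A z"
    then have "a \<in> carr" "inv\<^bsub>AG\<^esub> a \<in> carr" using inv_closed by (auto simp: component_iff)
    then show "inv\<^bsub>AG\<^esub> a \<in> A z" using a by (auto simp: component_iff inv_AG carr_iff prodT_iff)
  next
    fix a c assume "a \<in> A z" "c \<in> A z"
    then show "a \<otimes>\<^bsub>AG\<^esub> c \<in> A z"
      by (auto simp: component_iff sdp_add_closed sdp_add_def carr_iff prodT_iff)
  qed
qed

lemma lambda_component:
  assumes "x \<in> carr" "a \<in> A z"
  shows "(x \<otimes>\<^bsub>MG\<^esub> a) \<otimes>\<^bsub>AG\<^esub> inv\<^bsub>AG\<^esub> x \<in> A z"
proof -
  interpret AG: comm_group AG by (rule comm_group_AG)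
  interpret MG: group MG by (rule group_MG)
  have a: "a \<in> carr" using assms(2) by (simp add: component_iff)
  have "(x \<otimes>\<^bsub>MG\<^esub> a) \<otimes>\<^bsub>AG\<^esub> inv\<^bsub>AG\<^esub> x \<in> carr"
    using assms(1) a by (metis AG.inv_closed AG.m_closed MG.m_closed carrier_AG carrier_MG)
  moreover have "fst ((x \<otimes>\<^bsub>MG\<^esub> a) \<otimes>\<^bsub>AG\<^esub> inv\<^bsub>AG\<^esub> x) w = 0 \<and> snd ((x \<otimes>\<^bsub>MG\<^esub> a) \<otimes>\<^bsub>AG\<^esub> inv\<^bsub>AG\<^esub> x) w = 0"
    if w: "w < n" "w \<noteq> z" for w
  proof -
    have "fst a w = 0" "snd a w = 0" using assms(2) w by (auto simp: component_iff)
    moreover have "alpha n f (snd x) (fst a) w = 0"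
      using assms(1) a \<open>fst a w = 0\<close> by (auto simp: carr_iff intro: alpha_vanishes_at)
    moreover have "fst x w \<in> TT w" using assms(1) w by (auto simp: carr_iff prodT_iff)
    ultimately show ?thesis using w assms(1) by (simp add: inv_AG sdp_add_def sdp_mult_def b_uminus_right)
  qed
  ultimately show ?thesis by (simp add: component_iff)
qed

lemma component_left_ideal: "z < n \<Longrightarrow> left_ideal AG MG (A z)"
  unfolding left_ideal_def carrier_MG using component_subgroup_AG lambda_component by blast

lemma component_vanishes_off:
  assumes "a \<in> A z" "w \<noteq> z"
  shows "fst a w = 0" "snd a w = 0"
  using assms by (cases "w < n"; auto simp: component_iff carr_iff prodT_iff)+

lemma finprod_components:
  assumes a: "a \<in> (\<Pi>\<^sub>E z\<in>{..<n}. A z)" and "m \<le> n"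
  shows "finprod AG a {..<m} =
    (\<lambda>w. if w < m then fst (a w) w else 0, \<lambda>w. if w < m then snd (a w) w else 0)"
  using \<open>m \<le> n\<close>
proof (induction m)
  case 0
  interpret comm_group AG by (rule comm_group_AG)
  show ?case by simp
next
  case (Suc m)
  interpret comm_group AG by (rule comm_group_AG)
  have aA: "a z \<in> A z" if "z < n" for z using a that by (simp add: PiE_iff)
  have aC: "a z \<in> carr" if "z < n" for z using aA[OF that] by (simp add: component_iff)
  have "finprod AG a {..<Suc m} = sdp_add n b (a m) (finprod AG a {..<m})"
    unfolding lessThan_Suc using Suc.prems aC by (subst finprod_insert) auto
  also have "\<dots> = (\<lambda>w. if w < Suc m then fst (a w) w else 0, \<lambda>w. if w < Suc m then snd (a w) w else 0)"
  proof -
    have "snd (sdp_add n b (a m) (finprod AG a {..<m})) w = (if w < Suc m then snd (a w) w else 0)" for w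
    proof -
      have "fst (a w) w \<in> TT w" if "w \<le> m" using Suc.prems aC[of w] that by (auto simp: carr_iff prodT_iff)
      then show ?thesis
        using Suc component_vanishes_off[OF aA[of m], of w] by (auto simp: sdp_add_def less_Suc_eq)
    qed
    moreover have "fst (sdp_add n b (a m) (finprod AG a {..<m})) w = (if w < Suc m then fst (a w) w else 0)" for w
      using Suc component_vanishes_off[OF aA[of m], of w] by (auto simp: sdp_add_def less_Suc_eq)
    ultimately show ?thesis by (simp add: prod_eq_iff fun_eq_iff)
  qed
  finally show ?case .
qed

lemma components_direct_sum:
  assumes x: "x \<in> carrier AG"
  shows "\<exists>!a. a \<in> (\<Pi>\<^sub>E z\<in>{..<n}. A z) \<and> x = finprod AG a {..<n}"
proof (rule ex1I)
  have xC: "fst x \<in> prodT n TT" "snd x \<in> prodT n SS" using x by (auto simp: carr_iff)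
  define a0 where "a0 = (\<lambda>z\<in>{..<n}. (\<lambda>w. if w = z then fst x z else 0, \<lambda>w. if w = z then snd x z else 0))"
  have a0: "a0 \<in> (\<Pi>\<^sub>E z\<in>{..<n}. A z)"
    using xC by (auto simp: a0_def component_iff carr_iff prodT_iff)
  moreover have "finprod AG a0 {..<n} = x"
    using finprod_components[OF a0 order_refl] xC by (auto simp: a0_def prod_eq_iff fun_eq_iff prodT_iff)
  ultimately show "a0 \<in> (\<Pi>\<^sub>E z\<in>{..<n}. A z) \<and> x = finprod AG a0 {..<n}" by simp
  fix a assume a: "a \<in> (\<Pi>\<^sub>E z\<in>{..<n}. A z) \<and> x = finprod AG a {..<n}"
  have diag: "fst (a w) w = fst x w" "snd (a w) w = snd x w" if "w < n" for w
    using a finprod_components[of a n] that by (auto simp: prod_eq_iff fun_eq_iff)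
  show "a = a0"
  proof (rule PiE_ext[OF conjunct1[OF a] a0])
    fix z assume z: "z \<in> {..<n}"
    then have "a z \<in> A z" using a by auto
    then have "fst (a z) w = fst (a0 z) w \<and> snd (a z) w = snd (a0 z) w" for w
      using z diag[of z] component_vanishes_off[of "a z" z w] by (auto simp: a0_def)
    then show "a z = a0 z" by (simp add: prod_eq_iff fun_eq_iff)
  qed
qed

lemma MG_not_commutative:
  assumes "\<not> alpha_trivial n TT SS f"
  shows "\<not> (\<forall>x\<in>carrier MG. \<forall>y\<in>carrier MG. x \<otimes>\<^bsub>MG\<^esub> y = y \<otimes>\<^bsub>MG\<^esub> x)"
proof
  assume comm: "\<forall>x\<in>carrier MG. \<forall>y\<in>carrier MG. x \<otimes>\<^bsub>MG\<^esub> y = y \<otimes>\<^bsub>MG\<^esub> x"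
  obtain s t where st: "s \<in> prodT n SS" "t \<in> prodT n TT" "alpha n f s t \<noteq> t"
    using assms unfolding alpha_trivial_def by blast
  have "((\<lambda>_. 0), s) \<otimes>\<^bsub>MG\<^esub> (t, (\<lambda>_. 0)) = (t, (\<lambda>_. 0)) \<otimes>\<^bsub>MG\<^esub> ((\<lambda>_. 0), s)"
    using comm st by (simp add: carr_iff)
  then have "alpha n f s t = t" by (simp add: sdp_mult_def alpha_zero fun_eq_iff)
  with st show False by simp
qed

definition tpart :: "((nat \<Rightarrow> 't) \<times> (nat \<Rightarrow> 's)) set" where
  "tpart = {x \<in> carr. snd x = (\<lambda>_. 0)}"

lemma tpart_subgroup: "subgroup tpart MG"
proof -
  interpret group MG by (rule group_MG)
  show ?thesis
  proof (rule subgroupI)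
    show "tpart \<subseteq> carrier MG" by (auto simp: tpart_def)
    have "\<one>\<^bsub>MG\<^esub> \<in> tpart" by (simp add: tpart_def carr_iff)
    then show "tpart \<noteq> {}" by blast
  next
    fix a assume a: "a \<in> tpart"
    then have "a \<in> carr" "inv\<^bsub>MG\<^esub> a \<in> carr" using inv_closed by (auto simp: tpart_def)
    then show "inv\<^bsub>MG\<^esub> a \<in> tpart" using a by (simp add: tpart_def inv_MG)
  next
    fix a c assume "a \<in> tpart" "c \<in> tpart"
    then show "a \<otimes>\<^bsub>MG\<^esub> c \<in> tpart" by (simp add: tpart_def sdp_mult_closed) (simp add: sdp_mult_def)
  qed
qed

lemma tpart_mult: "x \<in> tpart \<Longrightarrow> y \<in> tpart \<Longrightarrow> sdp_mult n f x y = (\<lambda>z. fst x z + fst y z, \<lambda>_. 0)"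
  by (simp add: tpart_def carr_iff sdp_mult_def alpha_zero_shift)

lemma tpart_mult_commute: "x \<in> tpart \<Longrightarrow> y \<in> tpart \<Longrightarrow> x \<otimes>\<^bsub>MG\<^esub> y = y \<otimes>\<^bsub>MG\<^esub> x"
  by (simp add: tpart_mult add.commute)

lemma quotient_in_tpart:
  assumes "x \<in> carr" "y \<in> carr" "snd x = snd y"
  shows "inv\<^bsub>MG\<^esub> y \<otimes>\<^bsub>MG\<^esub> x \<in> tpart"
proof -
  interpret group MG by (rule group_MG)
  have "inv\<^bsub>MG\<^esub> y \<otimes>\<^bsub>MG\<^esub> x \<in> carr" using assms by (metis carrier_MG inv_closed m_closed)
  then show ?thesis using assms by (simp add: tpart_def inv_MG sdp_mult_def)
qed

lemma derived_set_subset_tpart: "derived_set MG (carrier MG) \<subseteq> tpart"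
proof
  interpret group MG by (rule group_MG)
  fix x assume "x \<in> derived_set MG (carrier MG)"
  then obtain h1 h2 where h: "h1 \<in> carr" "h2 \<in> carr"
    and x: "x = h1 \<otimes>\<^bsub>MG\<^esub> h2 \<otimes>\<^bsub>MG\<^esub> inv\<^bsub>MG\<^esub> h1 \<otimes>\<^bsub>MG\<^esub> inv\<^bsub>MG\<^esub> h2" by auto
  have "x \<in> carr" using h x by (metis carrier_MG m_closed inv_closed)
  moreover have "snd x = (\<lambda>_. 0)" using h by (simp add: x inv_MG sdp_mult_def)
  ultimately show "x \<in> tpart" by (simp add: tpart_def)
qed

lemma metabelian_MG: "metabelian MG"
  by (rule group.metabelianI[OF group_MG tpart_subgroup tpart_mult_commute derived_set_subset_tpart])

definition proj_S :: "nat \<Rightarrow> (nat \<Rightarrow> 't) \<times> (nat \<Rightarrow> 's) \<Rightarrow> (nat \<Rightarrow> 't) \<times> (nat \<Rightarrow> 's)" where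
  "proj_S w x = (\<lambda>_. 0, \<lambda>v. if v = w then snd x w else 0)"

definition proj_T :: "nat \<Rightarrow> (nat \<Rightarrow> 't) \<times> (nat \<Rightarrow> 's) \<Rightarrow> (nat \<Rightarrow> 't) \<times> (nat \<Rightarrow> 's)" where
  "proj_T w x = (\<lambda>v. if v = w then fst x w else 0, \<lambda>_. 0)"

lemma proj_S_hom: "w < n \<Longrightarrow> proj_S w \<in> hom MG (MG\<lparr>carrier := A w\<rparr>)"
  by (rule homI)
    (auto simp: proj_S_def component_iff carr_iff prodT_iff sdp_mult_def alpha_zero fun_eq_iff)

lemma proj_T_in_tpart: "x \<in> carr \<Longrightarrow> proj_T w x \<in> tpart"
  by (auto simp: proj_T_def tpart_def carr_iff prodT_iff)

lemma proj_T_hom: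
  assumes "w < n"
  shows "proj_T w \<in> hom (MG\<lparr>carrier := tpart\<rparr>) (MG\<lparr>carrier := A w\<rparr>)"
proof (rule homI)
  fix x assume "x \<in> carrier (MG\<lparr>carrier := tpart\<rparr>)"
  then show "proj_T w x \<in> carrier (MG\<lparr>carrier := A w\<rparr>)"
    using assms by (auto simp: proj_T_def tpart_def component_iff carr_iff prodT_iff)
next
  fix x y assume "x \<in> carrier (MG\<lparr>carrier := tpart\<rparr>)" "y \<in> carrier (MG\<lparr>carrier := tpart\<rparr>)"
  then have "x \<in> tpart" "y \<in> tpart" by simp_all
  moreover have "proj_T w x \<in> tpart" "proj_T w y \<in> tpart"
    using calculation by (intro proj_T_in_tpart; simp add: tpart_def)+
  ultimately show "proj_T w (x \<otimes>\<^bsub>MG\<lparr>carrier := tpart\<rparr>\<^esub> y) =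
      proj_T w x \<otimes>\<^bsub>MG\<lparr>carrier := A w\<rparr>\<^esub> proj_T w y"
    by (simp add: tpart_mult) (simp add: proj_T_def fun_eq_iff)
qed

lemma snd_vanishes_of_pow_coprime:
  assumes "w < n" "x \<in> carr" "x [^]\<^bsub>MG\<^esub> m = \<one>\<^bsub>MG\<^esub>" "coprime m (card (A w))"
  shows "snd x w = 0"
proof -
  have "proj_S w x = \<one>\<^bsub>MG\<^esub>"
    using hom_pow_coprime_eq_one[OF group_MG _ proj_S_hom] assms
    by (simp add: group.subgroup_imp_group[OF group_MG component_subgroup_MG] order_def)
  then show ?thesis by (auto simp: proj_S_def fun_eq_iff dest: spec[of _ w])
qed

lemma fst_vanishes_of_pow_coprime:
  assumes "w < n" "x \<in> tpart" "x [^]\<^bsub>MG\<^esub> m = \<one>\<^bsub>MG\<^esub>" "coprime m (card (A w))"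
  shows "fst x w = 0"
proof -
  have "proj_T w x = \<one>\<^bsub>MG\<^esub>"
    using hom_pow_coprime_eq_one[OF _ _ proj_T_hom] assms
      group.subgroup_imp_group[OF group_MG tpart_subgroup]
      group.subgroup_imp_group[OF group_MG component_subgroup_MG]
      monoid.nat_pow_consistent[OF group.is_monoid[OF group_MG], of x m tpart]
    by (simp add: order_def)
  then show ?thesis by (auto simp: proj_T_def fun_eq_iff dest: spec[of _ w])
qed

lemma mult_commute_if_concentrated:
  assumes "x \<in> carr" "y \<in> carr"
    and snd_conc: "\<forall>w<n. w \<noteq> z0 \<longrightarrow> snd x w = 0 \<and> snd y w = 0"
    and fst_conc: "\<forall>w<n. w \<noteq> z0 \<longrightarrow> fst (inv\<^bsub>MG\<^esub> (y \<otimes>\<^bsub>MG\<^esub> x) \<otimes>\<^bsub>MG\<^esub> (x \<otimes>\<^bsub>MG\<^esub> y)) w = 0"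
  shows "x \<otimes>\<^bsub>MG\<^esub> y = y \<otimes>\<^bsub>MG\<^esub> x"
proof -
  interpret group MG by (rule group_MG)
  define c where "c = inv\<^bsub>MG\<^esub> (y \<otimes>\<^bsub>MG\<^esub> x) \<otimes>\<^bsub>MG\<^esub> (x \<otimes>\<^bsub>MG\<^esub> y)"
  have xy: "x \<otimes>\<^bsub>MG\<^esub> y \<in> carr" and yx: "y \<otimes>\<^bsub>MG\<^esub> x \<in> carr" and c: "c \<in> carr"
    using assms(1,2) unfolding c_def by (metis carrier_MG m_closed inv_closed)+
  have yx_c: "(y \<otimes>\<^bsub>MG\<^esub> x) \<otimes>\<^bsub>MG\<^esub> c = x \<otimes>\<^bsub>MG\<^esub> y"
    unfolding c_def using xy yx by (metis carrier_MG inv_closed m_assoc r_inv l_one)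
  have "fst (x \<otimes>\<^bsub>MG\<^esub> y) w = fst (y \<otimes>\<^bsub>MG\<^esub> x) w" for w
  proof -
    consider "n \<le> w" | "w = z0" "w < n" | "w \<noteq> z0" "w < n" by linarith
    then show ?thesis
    proof cases
      case 1
      then show ?thesis using xy yx by (simp add: carr_iff prodT_iff)
    next
      case 2
      then have "alpha n f (snd x) (fst y) w = fst y w" "alpha n f (snd y) (fst x) w = fst x w"
        using assms(1,2) snd_conc by (auto simp: carr_iff intro!: alpha_concentrated_at)
      then show ?thesis by (simp add: sdp_mult_def)
    next
      case 3
      have "alpha n f (snd (y \<otimes>\<^bsub>MG\<^esub> x)) (fst c) w = 0"
        using yx c 3 fst_conc by (auto simp: carr_iff c_def simp del: mult_MG intro!: alpha_vanishes_at)
      then show ?thesis by (subst yx_c[symmetric]) (simp add: sdp_mult_def)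
    qed
  qed
  moreover have "snd (x \<otimes>\<^bsub>MG\<^esub> y) = snd (y \<otimes>\<^bsub>MG\<^esub> x)"
    by (simp add: sdp_mult_def add.commute)
  ultimately show ?thesis by (simp add: prod_eq_iff fun_eq_iff del: mult_MG)
qed

lemma sylow_subgroup_comm_group:
  assumes coprime: "\<forall>z<n. \<forall>z'<n. z \<noteq> z' \<longrightarrow> coprime (card (A z)) (card (A z'))"
    and sylow: "sylow_subgroup MG p P"
  shows "comm_group (MG\<lparr>carrier := P\<rparr>)"
proof -
  interpret group MG by (rule group_MG)
  from sylow obtain k where p: "Factorial_Ring.prime p" and P: "subgroup P MG" and card_P: "card P = p ^ k"
    unfolding sylow_subgroup_def by blast
  interpret P: group "MG\<lparr>carrier := P\<rparr>" by (rule subgroup_imp_group[OF P])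
  obtain z0 where z0: "\<forall>w\<in>{..<n}. w \<noteq> z0 \<longrightarrow> \<not> p dvd card (A w)"
    using prime_dvd_at_most_one[OF p, of "{..<n}" "\<lambda>z. card (A z)"] coprime by auto
  have coprime_pk: "coprime (p ^ k) (card (A w))" if "w < n" "w \<noteq> z0" for w
    using z0 that p by (simp add: prime_imp_coprime coprime_power_left_iff)
  have pow_pk: "x [^]\<^bsub>MG\<^esub> (p ^ k) = \<one>\<^bsub>MG\<^esub>" if "x \<in> P" for x
    using P.pow_order_eq_1[of x] that nat_pow_consistent[of x "p ^ k" P] card_P by (simp add: order_def)
  have in_carr: "x \<in> P \<Longrightarrow> x \<in> carr" for x using subgroup.subset[OF P] by auto
  show ?thesis
  proof (rule comm_group_subgroupI[OF P])
    fix x y assume xy: "x \<in> P" "y \<in> P"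
    define c where "c = inv\<^bsub>MG\<^esub> (y \<otimes>\<^bsub>MG\<^esub> x) \<otimes>\<^bsub>MG\<^esub> (x \<otimes>\<^bsub>MG\<^esub> y)"
    have "c \<in> P" unfolding c_def using xy P by (meson subgroup.m_closed subgroup.m_inv_closed)
    moreover have "c \<in> tpart"
      unfolding c_def using xy in_carr
      by (intro quotient_in_tpart) (simp_all add: sdp_mult_closed, simp add: sdp_mult_def add.commute)
    ultimately have "\<forall>w<n. w \<noteq> z0 \<longrightarrow> fst c w = 0"
      using fst_vanishes_of_pow_coprime pow_pk coprime_pk by blast
    moreover have "\<forall>w<n. w \<noteq> z0 \<longrightarrow> snd x w = 0 \<and> snd y w = 0"
      using snd_vanishes_of_pow_coprime pow_pk coprime_pk xy in_carr by blast
    ultimately show "x \<otimes>\<^bsub>MG\<^esub> y = y \<otimes>\<^bsub>MG\<^esub> x"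
      using mult_commute_if_concentrated[of x y z0] xy in_carr unfolding c_def by blast
  qed
qed

end

theorem proposition2p3:
  fixes n :: nat
    and TT :: "nat \<Rightarrow> 't::ab_group_add set" and SS :: "nat \<Rightarrow> 's::ab_group_add set"
    and b :: "nat \<Rightarrow> 't \<Rightarrow> 't \<Rightarrow> 's" and f :: "nat \<Rightarrow> nat \<Rightarrow> 's \<Rightarrow> 't \<Rightarrow> 't"
  assumes "setting n TT SS b f"
  defines "AG \<equiv> sdp_addG n TT SS b" and "MG \<equiv> sdp_multG n TT SS f"
    and "A \<equiv> component n TT SS"
  shows "(\<forall>z<n. left_ideal AG MG (A z) \<and> comm_group (MG\<lparr>carrier := A z\<rparr>))
       \<and> (\<forall>x\<in>carrier AG. \<exists>!a. a \<in> (\<Pi>\<^sub>E z\<in>{..<n}. A z) \<and> x = finprod AG a {..<n})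
       \<and> (\<not> alpha_trivial n TT SS f \<longrightarrow>
            metabelian MG \<and> \<not> (\<forall>x\<in>carrier MG. \<forall>y\<in>carrier MG. x \<otimes>\<^bsub>MG\<^esub> y = y \<otimes>\<^bsub>MG\<^esub> x))
       \<and> ((\<forall>z<n. finite (A z)) \<and> (\<forall>z<n. \<forall>z'<n. z \<noteq> z' \<longrightarrow> coprime (card (A z)) (card (A z')))
            \<longrightarrow> (\<forall>p P. sylow_subgroup MG p P \<longrightarrow> comm_group (MG\<lparr>carrier := P\<rparr>)))"
proof -
  interpret sdp_setting n TT SS b f by (rule sdp_setting.intro) (rule assms(1))
  show ?thesis
    unfolding AG_def MG_def A_def
    using component_left_ideal component_comm_group components_direct_sum
      metabelian_MG MG_not_commutative sylow_subgroup_comm_group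
    by (intro conjI impI allI ballI) simp_all
qed

end
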